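(* Let $G$ be a finite, simple, connected, non-trivial graph with weak total metric dimension $m=\dim_{wt}(G)$ and diameter $D=\mathrm{diam}(G)$. Then: (1) $|V(G)|\le D^m+m$; (2) the maximum degree of $G$ satisfies $\Delta(G)\le 3^m-1$; (3) $G$ has a proper vertex coloring with at most $2^m$ colors.
   Context: All graphs are finite, simple, connected and non-trivial; $d(x,y)$ is the shortest-path distance. A vertex $x$ resolves two vertices $y,z$ if $d(y,x)\ne d(z,x)$. A set $W\subseteq V(G)$ is a resolving set if every two distinct vertices of $G$ are resolved by some element of $W$. A set $W$ is a weak total resolving set (WTR-set) if $W$ is a resolving set and, for every $w\in W$ and every $x\in V(G)\setminus W$, there is $w'\in W\setminus\{w\}$ with $d(x,w')\ne d(w,w')$. The weak total metric dimension $\dim_{wt}(G)$ is the minimum cardinality of a WTR-set for $G$. *)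

theory Defs
  imports Main
begin

definition simple_graph :: "'a set \<Rightarrow> ('a \<Rightarrow> 'a \<Rightarrow> bool) \<Rightarrow> bool" where
  "simple_graph V E \<longleftrightarrow> finite V \<and> (\<forall>x y. E x y \<longrightarrow> x \<in> V \<and> y \<in> V)
     \<and> (\<forall>x y. E x y \<longrightarrow> E y x) \<and> (\<forall>x. \<not> E x x)"

definition connected_graph :: "'a set \<Rightarrow> ('a \<Rightarrow> 'a \<Rightarrow> bool) \<Rightarrow> bool" where
  "connected_graph V E \<longleftrightarrow> (\<forall>x\<in>V. \<forall>y\<in>V. \<exists>n. (E ^^ n) x y)"

definition dist :: "('a \<Rightarrow> 'a \<Rightarrow> bool) \<Rightarrow> 'a \<Rightarrow> 'a \<Rightarrow> nat" where
  "dist E x y = (LEAST n. (E ^^ n) x y)"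

definition resolves :: "('a \<Rightarrow> 'a \<Rightarrow> bool) \<Rightarrow> 'a \<Rightarrow> 'a \<Rightarrow> 'a \<Rightarrow> bool" where
  "resolves E x y z \<longleftrightarrow> dist E y x \<noteq> dist E z x"

definition resolving_set :: "'a set \<Rightarrow> ('a \<Rightarrow> 'a \<Rightarrow> bool) \<Rightarrow> 'a set \<Rightarrow> bool" where
  "resolving_set V E W \<longleftrightarrow> W \<subseteq> V \<and>
     (\<forall>y\<in>V. \<forall>z\<in>V. y \<noteq> z \<longrightarrow> (\<exists>w\<in>W. resolves E w y z))"

definition wtr_set :: "'a set \<Rightarrow> ('a \<Rightarrow> 'a \<Rightarrow> bool) \<Rightarrow> 'a set \<Rightarrow> bool" where
  "wtr_set V E W \<longleftrightarrow> resolving_set V E W \<and>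
     (\<forall>w\<in>W. \<forall>x\<in>V - W. \<exists>w'\<in>W - {w}. dist E x w' \<noteq> dist E w w')"

definition dim_wt :: "'a set \<Rightarrow> ('a \<Rightarrow> 'a \<Rightarrow> bool) \<Rightarrow> nat" where
  "dim_wt V E = (LEAST k. \<exists>W. wtr_set V E W \<and> card W = k)"

definition diam :: "'a set \<Rightarrow> ('a \<Rightarrow> 'a \<Rightarrow> bool) \<Rightarrow> nat" where
  "diam V E = Max {dist E x y | x y. x \<in> V \<and> y \<in> V}"

definition degree :: "('a \<Rightarrow> 'a \<Rightarrow> bool) \<Rightarrow> 'a \<Rightarrow> nat" where
  "degree E x = card {y. E x y}"

definition max_degree :: "'a set \<Rightarrow> ('a \<Rightarrow> 'a \<Rightarrow> bool) \<Rightarrow> nat" where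
  "max_degree V E = Max (degree E ` V)"

definition proper_coloring :: "'a set \<Rightarrow> ('a \<Rightarrow> 'a \<Rightarrow> bool) \<Rightarrow> ('a \<Rightarrow> nat) \<Rightarrow> nat \<Rightarrow> bool" where
  "proper_coloring V E c k \<longleftrightarrow> (\<forall>x\<in>V. c x < k) \<and>
     (\<forall>x\<in>V. \<forall>y\<in>V. E x y \<longrightarrow> c x \<noteq> c y)"

end

theory Submission
  imports Defs "HOL-Library.FuncSet"
begin

text \<open>Take a WTR-set \<open>W\<close> of size \<open>m\<close>. For \<open>x \<notin> W\<close> all
  entries lie in \<open>{1..D}\<close>, giving at most \<open>D^m\<close> vertices outside \<open>W\<close>. Along an edge every entry
  changes by \<open>-1\<close>, \<open>0\<close> or \<open>1\<close>, and not all by \<open>0\<close>, so a vertex has at most \<open>3^m - 1\<close> neighbours.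
  Since some entry of adjacent vertices differs by exactly one, their parity vectors differ, and
  colouring by parity vectors is proper with \<open>2^m\<close> colours.\<close>

lemma dist_walk:
  assumes "connected_graph V E" "x \<in> V" "y \<in> V"
  shows "(E ^^ dist E x y) x y"
  using assms unfolding dist_def connected_graph_def by (meson LeastI_ex)

lemma dist_self [simp]: "dist E x x = 0"
  unfolding dist_def by (rule Least_eq_0) (rule relpowp_0_I)

lemma dist_eq_0_iff:
  assumes "connected_graph V E" "x \<in> V" "y \<in> V"
  shows "dist E x y = 0 \<longleftrightarrow> x = y"
  using dist_walk[OF assms] by (metis dist_self relpowp_0_E)

lemma dist_le_diam:
  assumes "finite V" "x \<in> V" "y \<in> V"
  shows "dist E x y \<le> diam V E"
proof -
  have "finite {dist E x y | x y. x \<in> V \<and> y \<in> V}"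
    using assms(1) by (intro finite_image_set2) auto
  then show ?thesis
    unfolding diam_def using assms(2,3) by (intro Max_ge) auto
qed

lemma dist_adjacent_le:
  assumes "connected_graph V E" "y \<in> V" "w \<in> V" "E x y"
  shows "dist E x w \<le> Suc (dist E y w)"
proof -
  have "(E ^^ Suc (dist E y w)) x w"
    using dist_walk[OF assms(1-3)] assms(4) by (rule relpowp_Suc_I2[rotated])
  then show ?thesis unfolding dist_def by (rule Least_le)
qed

lemma dist_adjacent_diff:
  assumes "simple_graph V E" "connected_graph V E" "w \<in> V" "E x y"
  shows "\<bar>int (dist E x w) - int (dist E y w)\<bar> \<le> 1"
proof -
  have "x \<in> V" "y \<in> V" "E y x"
    using assms(1,4) unfolding simple_graph_def by auto
  then have "dist E x w \<le> Suc (dist E y w)" "dist E y w \<le> Suc (dist E x w)"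
    using dist_adjacent_le[OF assms(2)] assms(3,4) by blast+
  then show ?thesis by linarith
qed

lemma wtr_set_vertex_set:
  assumes "connected_graph V E"
  shows "wtr_set V E V"
  unfolding wtr_set_def resolving_set_def resolves_def
proof (intro conjI ballI impI)
  fix y z assume "y \<in> V" "z \<in> V" "y \<noteq> z"
  then have "dist E y y \<noteq> dist E z y"
    using dist_eq_0_iff[OF assms] by simp
  then show "\<exists>w\<in>V. dist E y w \<noteq> dist E z w" using \<open>y \<in> V\<close> by blast
qed auto

lemma wtr_set_card_dim_wt:
  assumes "connected_graph V E"
  obtains W where "wtr_set V E W" "card W = dim_wt V E"
proof -
  have "\<exists>k W. wtr_set V E W \<and> card W = k"
    using wtr_set_vertex_set[OF assms] by blast
  then have "\<exists>W. wtr_set V E W \<and> card W = dim_wt V E"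
    unfolding dim_wt_def by (rule LeastI_ex)
  then show ?thesis using that by blast
qed

definition dist_vector :: "('a \<Rightarrow> 'a \<Rightarrow> bool) \<Rightarrow> 'a set \<Rightarrow> 'a \<Rightarrow> 'a \<Rightarrow> nat" where
  "dist_vector E W x = restrict (dist E x) W"

lemma dist_vector_eq_iff: "dist_vector E W x = dist_vector E W y \<longleftrightarrow> (\<forall>w\<in>W. dist E x w = dist E y w)"
  unfolding dist_vector_def by (metis restrict_apply' restrict_ext)

lemma inj_on_dist_vector:
  assumes "resolving_set V E W"
  shows "inj_on (dist_vector E W) V"
  using assms unfolding inj_on_def resolving_set_def resolves_def dist_vector_eq_iff by metis

lemma card_le_diam_power_resolving:
  assumes "connected_graph V E" "finite V" "resolving_set V E W"
  shows "card V \<le> diam V E ^ card W + card W"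
proof -
  have WV: "W \<subseteq> V" and finW: "finite W"
    using assms(2,3) unfolding resolving_set_def by (auto intro: finite_subset)
  have "dist_vector E W ` (V - W) \<subseteq> PiE W (\<lambda>_. {1..diam V E})"
  proof
    fix f assume "f \<in> dist_vector E W ` (V - W)"
    then obtain x where x: "x \<in> V - W" "f = dist_vector E W x" by blast
    have "dist E x w \<in> {1..diam V E}" if "w \<in> W" for w
      using that x WV dist_eq_0_iff[OF assms(1)] dist_le_diam[OF assms(2)]
      by (metis Diff_iff One_nat_def atLeastAtMost_iff less_one not_le subsetD)
    then show "f \<in> PiE W (\<lambda>_. {1..diam V E})"
      using x unfolding dist_vector_def by auto
  qed
  moreover have "inj_on (dist_vector E W) (V - W)"
    using inj_on_dist_vector[OF assms(3)] by (rule inj_on_subset) blast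
  ultimately have "card (V - W) \<le> card (PiE W (\<lambda>_. {1..diam V E}))"
    using finW by (intro card_inj_on_le) (auto simp: finite_PiE)
  also have "\<dots> = diam V E ^ card W"
    using finW by (simp add: card_PiE)
  finally show ?thesis
    using WV assms(2) by (metis add_le_mono1 card_Diff_subset card_mono finite_subset
        le_add_diff_inverse2)
qed

lemma degree_le_three_power_resolving:
  assumes "simple_graph V E" "connected_graph V E" "resolving_set V E W" "x \<in> V"
  shows "degree E x \<le> 3 ^ card W - 1"
proof -
  have WV: "W \<subseteq> V" and finW: "finite W" and adjV: "\<And>u v. E u v \<Longrightarrow> u \<in> V \<and> v \<in> V"
    using assms(1,3) unfolding resolving_set_def simple_graph_def by (auto intro: finite_subset)
  define step where "step u = (\<lambda>w\<in>W. int (dist E u w) - int (dist E x w))" for u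
  let ?Steps = "PiE W (\<lambda>_. {-1, 0, 1 :: int}) - {\<lambda>w\<in>W. 0}"
  have step_eq_iff: "step u = step v \<longleftrightarrow> dist_vector E W u = dist_vector E W v" for u v
    unfolding step_def dist_vector_eq_iff by (auto simp: fun_eq_iff restrict_def split: if_splits)
  have "inj_on step {u. E x u}"
    using inj_on_dist_vector[OF assms(3)] adjV unfolding inj_on_def step_eq_iff by blast
  moreover have "step ` {u. E x u} \<subseteq> ?Steps"
  proof clarify
    fix u assume u: "E x u"
    have "\<bar>int (dist E u w) - int (dist E x w)\<bar> \<le> 1" if "w \<in> W" for w
      using dist_adjacent_diff[OF assms(1,2)] u that WV adjV assms(1)
      unfolding simple_graph_def by blast
    then have "step u \<in> PiE W (\<lambda>_. {-1, 0, 1})"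
      unfolding step_def by (force simp: abs_le_iff)
    moreover have "u \<noteq> x"
      using u assms(1) unfolding simple_graph_def by blast
    then have "step u \<noteq> step x"
      using inj_on_dist_vector[OF assms(3)] u adjV assms(4) unfolding step_eq_iff inj_on_def
      by blast
    moreover have "step x = (\<lambda>w\<in>W. 0)"
      unfolding step_def by simp
    ultimately show "step u \<in> ?Steps" by simp
  qed
  ultimately have "degree E x \<le> card ?Steps"
    unfolding degree_def using finW by (intro card_inj_on_le) (auto simp: finite_PiE)
  also have "\<dots> = 3 ^ card W - 1"
    using finW by (simp add: card_Diff_singleton finite_PiE card_PiE numeral_3_eq_3)
  finally show ?thesis .
qed

lemma proper_coloring_from_map:
  assumes "finite S" "f ` V \<subseteq> S" "\<And>x y. x \<in> V \<Longrightarrow> y \<in> V \<Longrightarrow> E x y \<Longrightarrow> f x \<noteq> f y"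
  shows "\<exists>c. proper_coloring V E c (card S)"
proof -
  obtain h where h: "bij_betw h S {0..<card S}"
    using ex_bij_betw_finite_nat[OF assms(1)] by blast
  then have "inj_on h S" "h ` S = {0..<card S}"
    unfolding bij_betw_def by auto
  have "proper_coloring V E (h \<circ> f) (card S)"
    unfolding proper_coloring_def
  proof (intro conjI ballI impI)
    fix x assume "x \<in> V"
    then have "h (f x) \<in> h ` S" using assms(2) by blast
    then show "(h \<circ> f) x < card S"
      using \<open>h ` S = {0..<card S}\<close> by simp
  next
    fix x y assume "x \<in> V" "y \<in> V" "E x y"
    then show "(h \<circ> f) x \<noteq> (h \<circ> f) y"
      using \<open>inj_on h S\<close> assms(2,3) by (auto dest: inj_onD)
  qed
  then show ?thesis by blast
qed

lemma proper_coloring_two_power_resolving: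
  assumes "simple_graph V E" "connected_graph V E" "resolving_set V E W"
  shows "\<exists>c. proper_coloring V E c (2 ^ card W)"
proof -
  have WV: "W \<subseteq> V" and finW: "finite W"
    using assms(1,3) unfolding resolving_set_def simple_graph_def by (auto intro: finite_subset)
  define parity where "parity x = {w \<in> W. odd (dist E x w)}" for x
  have "parity x \<noteq> parity y" if xy: "x \<in> V" "y \<in> V" "E x y" for x y
  proof -
    have "x \<noteq> y" using xy(3) assms(1) unfolding simple_graph_def by blast
    then obtain w where w: "w \<in> W" "dist E x w \<noteq> dist E y w"
      using assms(3) xy unfolding resolving_set_def resolves_def by blast
    moreover have "\<bar>int (dist E x w) - int (dist E y w)\<bar> \<le> 1"
      using dist_adjacent_diff[OF assms(1,2) _ xy(3)] w(1) WV by blast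
    ultimately have "dist E x w = Suc (dist E y w) \<or> dist E y w = Suc (dist E x w)"
      by linarith
    then have "odd (dist E x w) \<noteq> odd (dist E y w)" by auto
    then show ?thesis unfolding parity_def using w(1) by blast
  qed
  moreover have "parity ` V \<subseteq> Pow W" unfolding parity_def by blast
  ultimately show ?thesis
    using proper_coloring_from_map[of "Pow W" parity V E] finW by (simp add: card_Pow)
qed

theorem proposition1:
  fixes V :: "'a set" and E :: "'a \<Rightarrow> 'a \<Rightarrow> bool"
  assumes "simple_graph V E" and "connected_graph V E" and "card V \<ge> 2"
  defines "m \<equiv> dim_wt V E" and "D \<equiv> diam V E"
  shows "card V \<le> D ^ m + m \<and> max_degree V E \<le> 3 ^ m - 1
         \<and> (\<exists>c. proper_coloring V E c (2 ^ m))"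
proof -
  have finV: "finite V" and "V \<noteq> {}"
    using assms(1,3) unfolding simple_graph_def by auto
  obtain W where "wtr_set V E W" and m: "card W = m"
    using wtr_set_card_dim_wt[OF assms(2)] unfolding m_def by blast
  then have W: "resolving_set V E W" unfolding wtr_set_def by blast
  have "max_degree V E \<le> 3 ^ m - 1"
    unfolding max_degree_def using finV \<open>V \<noteq> {}\<close>
      degree_le_three_power_resolving[OF assms(1,2) W] m
    by (intro Max.boundedI) auto
  then show ?thesis
    using card_le_diam_power_resolving[OF assms(2) finV W]
      proper_coloring_two_power_resolving[OF assms(1,2) W] m
    unfolding D_def by blast
qed

end
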